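(* Let $\bm\Phi\in\mathbb{R}^{N\times N}$, and for hyperparameters $\bm\beta\in B$ let $\mathcal{O}_{\bm\beta}\in\mathbb{R}^{N\times N}$ be symmetric positive definite, with $\mathbf{K}_{\bm\beta}=\bm\Phi\mathcal{O}_{\bm\beta}\bm\Phi^\top$. Parametrize $\bm\rho=(\tilde\gamma,\bm\beta,\sigma^2)\in(0,\infty)\times B\times(0,\infty)$ with $\tilde\gamma=\gamma\sigma^2$, and set $\mathbf{S}_{\bm\rho}=\mathbf{K}_{\bm\beta}/\gamma+\sigma^2\mathbf{I}$. Let $\bar{\mathbf{Q}}\in\mathbb{R}^{N\times N}$ be symmetric positive definite. Take factorizations $\mathcal{O}_{\bm\beta}/\tilde\gamma=\mathbf{L}_{\bm\rho}\mathbf{L}_{\bm\rho}^\top$ and $\bar{\mathbf{Q}}=\mathbf{C}\mathbf{C}^\top$ with $\mathbf{L}_{\bm\rho},\mathbf{C}$ triangular with positive diagonal, and a QR factorization $$\begin{bmatrix}\bm\Phi\mathbf{L}_{\bm\rho}&\mathbf{C}\\ \mathbf{I}&\mathbf{0}\end{bmatrix}=\mathbf{Q}_{\bm\rho}\begin{bmatrix}\mathbf{R}_{1,\bm\rho}&\mathbf{R}_{2,\bm\rho}\\ \mathbf{0}&\mathbf{R}_{3,\bm\rho}\end{bmatrix},$$ with $\mathbf{Q}_{\bm\rho}$ orthogonal and $\mathbf{R}_{1,\bm\rho},\mathbf{R}_{3,\bm\rho}\in\mathbb{R}^{N\times N}$ upper triangular with positive diagonal ($\mathbf{R}_{1,\bm\rho},\mathbf{R}_{2,\bm\rho}$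 depend only on $(\tilde\gamma,\bm\beta)$). Then $\|\mathbf{C}\|_F^2-\|\mathbf{R}_{2,\bm\rho}\|_F^2>0$, and $(\tilde\gamma^*,\bm\beta^*,\sigma^{2*})$ minimizes $f(\bm\rho)=\log\det(\mathbf{S}_{\bm\rho})+\mathrm{tr}\{\mathbf{S}_{\bm\rho}^{-1}\bar{\mathbf{Q}}\}$ over $(0,\infty)\times B\times(0,\infty)$ if and only if $$(\tilde\gamma^*,\bm\beta^* )\in\arg\min_{\tilde\gamma>0,\bm\beta\in B}\Big(N\log\big(\|\mathbf{C}\|_F^2-\|\mathbf{R}_{2,\bm\rho}\|_F^2\big)+2\log\det(\mathbf{R}_{1,\bm\rho})\Big)$$ and $\sigma^{2*}=\frac1N\big(\|\mathbf{C}\|_F^2-\|\mathbf{R}_{2,\bm\rho^*}\|_F^2\big)$.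
   Context: $\|\cdot\|_F$ denotes the Frobenius norm. In the paper, $\bar{\mathbf{Q}}$ is the conditional second moment $\bar{\mathbf{Q}}^{(j)}$ of the unquantized output at the current EM iterate, and the claim gives an equivalent form of the EM M-step $\arg\min_{\bm\rho}(\log\det\mathbf{S}_{\bm\rho}+\mathrm{tr}\{\mathbf{S}_{\bm\rho}^{-1}\bar{\mathbf{Q}}^{(j)}\})$ for Empirical Bayes hyperparameter estimation. *)

theory Defs
  imports "HOL-Analysis.Analysis"
begin

definition sym_pos_def :: "real^'n^'n \<Rightarrow> bool" where
  "sym_pos_def A \<longleftrightarrow> transpose A = A \<and> (\<forall>x. x \<noteq> 0 \<longrightarrow> x \<bullet> (A *v x) > 0)"

definition lower_tri_posdiag :: "real^('n::{finite,linorder})^('n::{finite,linorder}) \<Rightarrow> bool" where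
  "lower_tri_posdiag A \<longleftrightarrow> (\<forall>i j. i < j \<longrightarrow> A$i$j = 0) \<and> (\<forall>i. A$i$i > 0)"

definition upper_tri_posdiag :: "real^('n::{finite,linorder})^('n::{finite,linorder}) \<Rightarrow> bool" where
  "upper_tri_posdiag A \<longleftrightarrow> (\<forall>i j. j < i \<longrightarrow> A$i$j = 0) \<and> (\<forall>i. A$i$i > 0)"

definition frob_norm :: "real^'n^'m \<Rightarrow> real" where
  "frob_norm A = sqrt (\<Sum>i\<in>UNIV. \<Sum>j\<in>UNIV. (A$i$j)^2)"

text \<open>2x2 block matrix [[A,B],[C,D]]; top block rows/cols indexed by Inl, bottom by Inr.\<close>
definition block2 :: "real^'n^'n \<Rightarrow> real^'n^'n \<Rightarrow> real^'n^'n \<Rightarrow> real^'n^'n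
    \<Rightarrow> real^('n + 'n)^('n + 'n)" where
  "block2 A B C D = (\<chi> i j. (case i of
       Inl i' \<Rightarrow> (case j of Inl j' \<Rightarrow> A$i'$j' | Inr j' \<Rightarrow> B$i'$j')
     | Inr i' \<Rightarrow> (case j of Inl j' \<Rightarrow> C$i'$j' | Inr j' \<Rightarrow> D$i'$j')))"

text \<open>S_rho with gamma = tgam / s2 : S = K_beta / gamma + s2 I.\<close>
definition S_rho :: "real^'n^'n \<Rightarrow> ('b \<Rightarrow> real^'n^'n) \<Rightarrow> real \<Rightarrow> 'b \<Rightarrow> real \<Rightarrow> real^'n^'n" where
  "S_rho Phi Ob tgam b s2 =
     (inverse (tgam / s2)) *\<^sub>R (Phi ** Ob b ** transpose Phi) + s2 *\<^sub>R mat 1"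

definition EM_obj :: "real^'n^'n \<Rightarrow> ('b \<Rightarrow> real^'n^'n) \<Rightarrow> real^'n^'n \<Rightarrow> real \<Rightarrow> 'b \<Rightarrow> real \<Rightarrow> real" where
  "EM_obj Phi Ob Qbar tgam b s2 =
     ln (det (S_rho Phi Ob tgam b s2)) + trace (matrix_inv (S_rho Phi Ob tgam b s2) ** Qbar)"

end

theory Submission
  imports Defs "HOL-Computational_Algebra.Polynomial"
begin

text \<open>
  Put \<open>A = Phi L\<close>. Comparing Gram matrices on both sides of the QR factorization of
  \<open>[A C; I 0]\<close> gives \<open>I + A\<^sup>T A = R1\<^sup>T R1\<close>, \<open>A\<^sup>T C = R1\<^sup>T R2\<close> and
  \<open>C\<^sup>T C = R2\<^sup>T R2 + R3\<^sup>T R3\<close>. Since \<open>S = \<sigma>\<^sup>2 (I + A A\<^sup>T)\<close>, Sylvester's identity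
  \<open>det (I + A A\<^sup>T) = det (I + A\<^sup>T A)\<close> turns \<open>log det S\<close> into
  \<open>N log \<sigma>\<^sup>2 + 2 log det R1\<close>, and the push-through identity
  \<open>(I + A A\<^sup>T)\<^sup>-\<^sup>1 = I - A (I + A\<^sup>T A)\<^sup>-\<^sup>1 A\<^sup>T\<close> turns \<open>tr (S\<^sup>-\<^sup>1 C C\<^sup>T)\<close> into
  \<open>r / \<sigma>\<^sup>2\<close> with \<open>r = \<parallel>C\<parallel>\<^sup>2 - \<parallel>R2\<parallel>\<^sup>2 = \<parallel>R3\<parallel>\<^sup>2 > 0\<close>. For fixed \<open>(\<gamma>, \<beta>)\<close> the function
  \<open>N log s + r / s\<close> has its unique minimum at \<open>s = r / N\<close>, with value \<open>N log r\<close> plus a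
  constant, so minimizing jointly is the same as minimizing the profile and then setting
  \<open>\<sigma>\<^sup>2 = r / N\<close>.
\<close>

lemma transpose_zero [simp]: "transpose 0 = (0 :: 'a::zero^'n^'m)"
  by (simp add: transpose_def vec_eq_iff)

lemma matrix_add_rdistrib: "(A + B) ** C = A ** C + B ** (C :: 'a::semiring_1^_^_)"
  by (vector matrix_matrix_mult_def sum.distrib distrib_right)

lemma matrix_diff_ldistrib: "C ** (A - B) = C ** A - C ** (B :: 'a::ring_1^_^_)"
  by (vector matrix_matrix_mult_def sum_subtractf right_diff_distrib)

lemma matrix_diff_rdistrib: "(A - B) ** C = A ** C - B ** (C :: 'a::ring_1^_^_)"
  by (vector matrix_matrix_mult_def sum_subtractf left_diff_distrib)

lemma det_scaleR: "det (c *\<^sub>R A) = c ^ CARD('n) * det (A :: real^'n^'n)"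
proof -
  have "(\<Prod>i\<in>UNIV. (c *\<^sub>R A)$i$p i) = c ^ CARD('n) * (\<Prod>i\<in>UNIV. A$i$p i)" for p :: "'n \<Rightarrow> 'n"
    by (simp add: prod.distrib)
  then show ?thesis
    unfolding det_def by (simp add: sum_distrib_left mult.left_commute)
qed

lemma trace_scaleR: "trace (c *\<^sub>R A) = c * trace (A :: real^'n^'n)"
  by (simp add: trace_def sum_distrib_left)

lemma matrix_inv_right:
  "invertible A \<Longrightarrow> A ** matrix_inv A = mat 1"
  unfolding invertible_def matrix_inv_def by (rule someI2_ex) auto

lemma matrix_inv_unique:
  fixes A X :: "'a::field^'n^'n"
  assumes "A ** X = mat 1"
  shows "matrix_inv A = X"
proof -
  have "invertible A"
    using assms matrix_left_right_inverse unfolding invertible_def by blast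
  then have "matrix_inv A = matrix_inv A ** (A ** X)"
    using assms by simp
  also have "\<dots> = X"
    using matrix_inv_right[OF \<open>invertible A\<close>] matrix_left_right_inverse
    by (metis matrix_mul_assoc matrix_mul_lid)
  finally show ?thesis .
qed

lemma matrix_inv_scaleR:
  fixes A :: "real^'n^'n"
  assumes "c \<noteq> 0" "invertible A"
  shows "matrix_inv (c *\<^sub>R A) = inverse c *\<^sub>R matrix_inv A"
  using assms matrix_inv_right[OF assms(2)]
  by (intro matrix_inv_unique) (simp add: matrix_scalar_ac flip: scalar_matrix_assoc)

lemma id_plus_gram_push_through:
  "(mat 1 + A ** transpose A) ** A = A ** (mat 1 + transpose A ** (A :: 'a::comm_ring_1^'m^'n))"
  by (simp add: matrix_add_ldistrib matrix_add_rdistrib matrix_mul_assoc)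

definition poly_mat :: "'a::comm_semiring_0 poly^'n^'m \<Rightarrow> 'a \<Rightarrow> 'a^'n^'m" where
  "poly_mat M t = (\<chi> i j. poly (M$i$j) t)"

lemma poly_mat_add: "poly_mat (M + N) t = poly_mat M t + poly_mat N t"
  by (simp add: poly_mat_def vec_eq_iff)

lemma poly_mat_mult: "poly_mat (M ** N) t = poly_mat M t ** poly_mat N t"
  by (simp add: poly_mat_def vec_eq_iff matrix_matrix_mult_def poly_sum)

lemma poly_mat_transpose: "poly_mat (transpose M) t = transpose (poly_mat M t)"
  by (simp add: poly_mat_def vec_eq_iff transpose_def)

lemma poly_mat_mat: "poly_mat (mat c) t = mat (poly c t)"
  by (simp add: poly_mat_def vec_eq_iff mat_def)

lemma det_poly_mat: "det (poly_mat M t) = poly (det M) t"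
  by (simp add: poly_mat_def det_def poly_sum poly_prod)

lemma sylvester_det_gram_nonsingular:
  fixes X :: "'a::idom^'n^'n"
  assumes "det X \<noteq> 0"
  shows "det (mat 1 + X ** transpose X) = det (mat 1 + transpose X ** X)"
proof -
  have "det (mat 1 + X ** transpose X) * det X = det X * det (mat 1 + transpose X ** X)"
    by (metis det_mul id_plus_gram_push_through)
  with assms show ?thesis
    by (simp add: mult.commute)
qed

lemma det_add_scaled_id_nonzero:
  fixes A :: "real^'n^'n"
  obtains t where "det (A + t *\<^sub>R mat 1) \<noteq> 0"
proof -
  obtain K where "K > 0" and K: "\<And>x. norm (A *v x) \<le> norm x * K"
    using bounded_linear.pos_bounded[OF matrix_vector_mul_bounded_linear[of A]] by blast
  have "x = 0" if "(A + (K + 1) *\<^sub>R mat 1) *v x = 0" for x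
  proof -
    have "A *v x = - ((K + 1) *\<^sub>R x)"
      using that by (simp add: matrix_vector_mult_add_rdistrib scaleR_matrix_vector_assoc[symmetric] eq_neg_iff_add_eq_0)
    then have "norm x * (K + 1) \<le> norm x * K"
      using K[of x] \<open>K > 0\<close> by (simp add: mult.commute)
    then show "x = 0" by (simp add: distrib_left)
  qed
  then have "\<exists>B. B ** (A + (K + 1) *\<^sub>R mat 1) = mat 1"
    by (simp add: matrix_left_invertible_ker)
  then have "invertible (A + (K + 1) *\<^sub>R mat 1)"
    using matrix_left_right_inverse unfolding invertible_def by blast
  then show thesis
    using that invertible_det_nz by blast
qed

(* The perturbation A + t I is nonsingular as a matrix of polynomials in t, so the identity
   holds there by cancellation and survives evaluation at t = 0. *)
lemma sylvester_det_gram: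
  fixes A :: "real^'n^'n"
  shows "det (mat 1 + A ** transpose A) = det (mat 1 + transpose A ** A)"
proof -
  define X :: "real poly^'n^'n" where "X = (\<chi> i j. [:A$i$j:]) + mat [:0, 1:]"
  have X_at: "poly_mat X t = A + t *\<^sub>R mat 1" for t
    by (simp add: X_def poly_mat_def vec_eq_iff mat_def)
  obtain t where "det (A + t *\<^sub>R mat 1) \<noteq> 0"
    using det_add_scaled_id_nonzero .
  then have "det X \<noteq> 0"
    using det_poly_mat[of X t] X_at by auto
  then have "det (poly_mat (mat 1 + X ** transpose X) 0) = det (poly_mat (mat 1 + transpose X ** X) 0)"
    by (simp only: det_poly_mat sylvester_det_gram_nonsingular[OF \<open>det X \<noteq> 0\<close>])
  then show ?thesis
    by (simp add: poly_mat_add poly_mat_mult poly_mat_transpose poly_mat_mat X_at)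
qed

lemma permutes_id_if_increasing:
  fixes p :: "'a::{finite,linorder} \<Rightarrow> 'a"
  assumes p: "p permutes UNIV" and incr: "\<And>i. i \<le> p i"
  shows "p = id"
proof
  fix i
  have inj: "inj p"
    using p permutes_inj by blast
  have "p ` {i<..} = {i<..}"
    using incr by (intro endo_inj_surj) (auto intro: order.strict_trans2 inj_on_subset[OF inj])
  then have "p i \<notin> {i<..}"
    using inj by (auto dest: injD)
  then show "p i = id i"
    using incr[of i] by simp
qed

(* The library's det_upperdiagonal needs a wellorder on the index type, not just a linorder. *)
lemma det_upper_triangular:
  fixes A :: "'a::comm_ring_1^('n::{finite,linorder})^('n::{finite,linorder})"
  assumes "\<And>i j. j < i \<Longrightarrow> A$i$j = 0"
  shows "det A = (\<Prod>i\<in>UNIV. A$i$i)"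
proof -
  have "(\<Prod>i\<in>UNIV. A$i$p i) = 0" if p: "p permutes UNIV" "p \<noteq> id" for p
  proof -
    obtain i where "p i < i"
      using permutes_id_if_increasing[OF p(1)] p(2) by (meson not_le)
    then show ?thesis
      using assms by (intro prod_zero) auto
  qed
  then have "det A = (\<Sum>p\<in>{id}. of_int (sign p) * (\<Prod>i\<in>UNIV. A$i$p i))"
    unfolding det_def
    by (intro sum.mono_neutral_right) (auto simp: finite_permutations)
  then show ?thesis
    by simp
qed

lemma det_pos_if_upper_tri_posdiag:
  fixes R :: "real^('n::{finite,linorder})^('n::{finite,linorder})"
  assumes "upper_tri_posdiag R"
  shows "det R > 0"
  using assms unfolding upper_tri_posdiag_def
  by (subst det_upper_triangular) (auto intro: prod_pos)

lemma sum_UNIV_Plus: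
  "sum f (UNIV :: ('a::finite + 'b::finite) set) = (\<Sum>i\<in>UNIV. f (Inl i)) + (\<Sum>i\<in>UNIV. f (Inr i))"
  using sum.Plus[of "UNIV :: 'a set" "UNIV :: 'b set" f] by (simp add: o_def)

lemma block2_mult:
  "block2 A B C D ** block2 E F G H =
   block2 (A ** E + B ** G) (A ** F + B ** H) (C ** E + D ** G) (C ** F + D ** H)"
  unfolding vec_eq_iff
  by (auto simp: block2_def matrix_matrix_mult_def sum_UNIV_Plus split: sum.splits)

lemma transpose_block2:
  "transpose (block2 A B C D) = block2 (transpose A) (transpose C) (transpose B) (transpose D)"
  unfolding vec_eq_iff by (auto simp: block2_def transpose_def split: sum.splits)

lemma block2_eq_iff:
  "block2 A B C D = block2 A' B' C' D' \<longleftrightarrow> A = A' \<and> B = B' \<and> C = C' \<and> D = D'"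
proof
  assume eq: "block2 A B C D = block2 A' B' C' D'"
  have "block2 A B C D $ i $ j = block2 A' B' C' D' $ i $ j" for i j
    using eq by simp
  from this[of "Inl _" "Inl _"] this[of "Inl _" "Inr _"] this[of "Inr _" "Inl _"] this[of "Inr _" "Inr _"]
  show "A = A' \<and> B = B' \<and> C = C' \<and> D = D'"
    by (simp add: block2_def vec_eq_iff)
qed simp

lemma QR_gram_blocks:
  fixes A C R1 R2 R3 :: "real^'n^'n" and Q :: "real^('n + 'n)^('n + 'n)"
  assumes QR: "block2 A C (mat 1) 0 = Q ** block2 R1 R2 0 R3" and Q: "orthogonal_matrix Q"
  shows "transpose A ** A + mat 1 = transpose R1 ** R1"
    and "transpose A ** C = transpose R1 ** R2"
    and "transpose C ** C = transpose R2 ** R2 + transpose R3 ** R3"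
proof -
  let ?M = "block2 A C (mat 1) 0" and ?R = "block2 R1 R2 0 R3"
  have "transpose ?M ** ?M = transpose ?R ** (transpose Q ** Q) ** ?R"
    unfolding QR matrix_transpose_mul matrix_mul_assoc ..
  also have "\<dots> = transpose ?R ** ?R"
    using Q unfolding orthogonal_matrix_def by simp
  finally show "transpose A ** A + mat 1 = transpose R1 ** R1"
    and "transpose A ** C = transpose R1 ** R2"
    and "transpose C ** C = transpose R2 ** R2 + transpose R3 ** R3"
    unfolding transpose_block2 block2_mult block2_eq_iff by simp_all
qed

lemma frob_norm_sq: "(frob_norm A)^2 = trace (transpose A ** A)"
proof -
  have "(frob_norm A)^2 = (\<Sum>i\<in>UNIV. \<Sum>j\<in>UNIV. (A$i$j)^2)"
    unfolding frob_norm_def by (simp add: sum_nonneg)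
  also have "\<dots> = trace (transpose A ** A)"
    by (subst sum.swap) (simp add: trace_def matrix_matrix_mult_def transpose_def power2_eq_square)
  finally show ?thesis .
qed

lemma frob_norm_pos: "A$i$j \<noteq> 0 \<Longrightarrow> frob_norm A > 0"
  unfolding frob_norm_def
  by (intro real_sqrt_gt_zero sum_pos2[of UNIV i] sum_nonneg) (auto intro!: sum_pos2[of UNIV j])

lemma QR_residual_pos:
  fixes A C R1 R2 R3 :: "real^('n::{finite,linorder})^('n::{finite,linorder})"
    and Q :: "real^('n + 'n)^('n + 'n)"
  assumes "block2 A C (mat 1) 0 = Q ** block2 R1 R2 0 R3" "orthogonal_matrix Q"
    and "upper_tri_posdiag R3"
  shows "(frob_norm C)^2 - (frob_norm R2)^2 > 0"
proof -
  have "(frob_norm C)^2 - (frob_norm R2)^2 = (frob_norm R3)^2"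
    using QR_gram_blocks(3)[OF assms(1,2)] by (simp add: frob_norm_sq trace_add)
  moreover have "frob_norm R3 > 0"
    using assms(3) unfolding upper_tri_posdiag_def by (metis frob_norm_pos less_irrefl)
  ultimately show ?thesis
    by simp
qed

lemma id_plus_gram_right_inverse:
  fixes A :: "'a::comm_ring_1^'m^'n"
  assumes "(mat 1 + transpose A ** A) ** G = mat 1"
  shows "(mat 1 + A ** transpose A) ** (mat 1 - A ** G ** transpose A) = mat 1"
proof -
  have "(mat 1 + A ** transpose A) ** (A ** G ** transpose A) = A ** transpose A"
    by (simp add: matrix_mul_assoc id_plus_gram_push_through) (simp add: assms flip: matrix_mul_assoc)
  then show ?thesis
    by (simp add: matrix_diff_ldistrib)
qed

lemma S_rho_eq_scaled_id_plus_gram: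
  assumes "inverse g *\<^sub>R Ob b = L ** transpose L"
  shows "S_rho Phi Ob g b s = s *\<^sub>R (mat 1 + (Phi ** L) ** transpose (Phi ** L))"
proof -
  have "inverse (g / s) *\<^sub>R (Phi ** Ob b ** transpose Phi) = s *\<^sub>R (Phi ** (inverse g *\<^sub>R Ob b) ** transpose Phi)"
    by (simp add: scalar_matrix_assoc matrix_scalar_ac divide_inverse mult.commute)
  then show ?thesis
    unfolding S_rho_def assms by (simp add: matrix_transpose_mul matrix_mul_assoc scaleR_add_right add.commute)
qed

lemma trace_inv_id_plus_gram:
  fixes A C R1 R2 :: "real^'n^'n"
  assumes gram1: "mat 1 + transpose A ** A = transpose R1 ** R1"
    and gram2: "transpose A ** C = transpose R1 ** R2"
    and R1: "det R1 \<noteq> 0"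
  shows "trace (matrix_inv (mat 1 + A ** transpose A) ** (C ** transpose C))
           = (frob_norm C)^2 - (frob_norm R2)^2"
proof -
  obtain R1' where R1': "R1 ** R1' = mat 1" "R1' ** R1 = mat 1"
    using R1 invertible_det_nz[of R1] unfolding invertible_def by auto
  define G where "G = R1' ** transpose R1'"
  have "(mat 1 + transpose A ** A) ** G = transpose R1 ** (R1 ** R1') ** transpose R1'"
    by (simp add: G_def gram1 matrix_mul_assoc)
  also have "\<dots> = transpose (R1' ** R1)"
    by (simp add: R1'(1) matrix_transpose_mul)
  finally have "(mat 1 + transpose A ** A) ** G = mat 1"
    by (simp add: R1'(2))
  then have "matrix_inv (mat 1 + A ** transpose A) = mat 1 - A ** G ** transpose A"
    by (intro matrix_inv_unique id_plus_gram_right_inverse)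
  moreover have R2: "R2 = transpose R1' ** (transpose A ** C)"
    by (simp add: gram2 matrix_mul_assoc R1'(1) flip: matrix_transpose_mul)
  have "trace (A ** G ** transpose A ** (C ** transpose C)) = (frob_norm R2)^2"
    unfolding R2 frob_norm_sq
    by (simp add: G_def matrix_transpose_mul matrix_mul_assoc trace_mul_sym[of _ "transpose C"])
  ultimately show ?thesis
    by (simp add: matrix_diff_rdistrib trace_sub frob_norm_sq trace_mul_sym[of C])
qed

lemma EM_obj_QR:
  fixes Phi L C R1 R2 R3 :: "real^'n^'n" and Q :: "real^('n + 'n)^('n + 'n)"
  assumes s: "s > 0"
    and L: "inverse g *\<^sub>R Ob b = L ** transpose L"
    and QR: "block2 (Phi ** L) C (mat 1) 0 = Q ** block2 R1 R2 0 R3" "orthogonal_matrix Q"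
    and R1: "det R1 > 0"
  shows "EM_obj Phi Ob (C ** transpose C) g b s
           = real CARD('n) * ln s + 2 * ln (det R1) + ((frob_norm C)^2 - (frob_norm R2)^2) / s"
proof -
  define A where "A = Phi ** L"
  note gram = QR_gram_blocks[OF QR[folded A_def]]
  have gram1: "mat 1 + transpose A ** A = transpose R1 ** R1"
    using gram(1) by (simp add: add.commute)
  have S: "S_rho Phi Ob g b s = s *\<^sub>R (mat 1 + A ** transpose A)"
    unfolding A_def using L by (rule S_rho_eq_scaled_id_plus_gram)
  have det: "det (mat 1 + A ** transpose A) = det R1 ^ 2"
    by (simp add: sylvester_det_gram gram1 det_mul power2_eq_square)
  then have "invertible (mat 1 + A ** transpose A)"
    using R1 by (simp add: invertible_det_nz)
  then have "trace (matrix_inv (S_rho Phi Ob g b s) ** (C ** transpose C))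
      = ((frob_norm C)^2 - (frob_norm R2)^2) / s"
    using trace_inv_id_plus_gram[OF gram1 gram(2)] R1 s
    by (simp add: S matrix_inv_scaleR trace_scaleR divide_inverse mult.commute flip: scalar_matrix_assoc)
  moreover have "ln (det (S_rho Phi Ob g b s)) = real CARD('n) * ln s + 2 * ln (det R1)"
    unfolding S det_scaleR det using s R1 by (simp add: ln_mult ln_realpow)
  ultimately show ?thesis
    unfolding EM_obj_def by simp
qed

lemma ln_plus_ratio_minimum:
  fixes N r s :: real
  assumes "N > 0" "r > 0" "s > 0"
  shows "N * ln (r / N) + N \<le> N * ln s + r / s"
    and "N * ln s + r / s \<le> N * ln (r / N) + N \<longleftrightarrow> s = r / N"
proof -
  define u where "u = r / (N * s)"
  have u: "u > 0"
    unfolding u_def using assms by simp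
  have gap: "N * ln s + r / s - (N * ln (r / N) + N) = N * (u - 1 - ln u)"
    unfolding u_def using assms by (simp add: ln_div ln_mult field_simps)
  have gap_nonneg: "u - 1 - ln u \<ge> 0"
    using ln_le_minus_one[OF u] by simp
  then show "N * ln (r / N) + N \<le> N * ln s + r / s"
    using gap mult_nonneg_nonneg[of N "u - 1 - ln u"] \<open>N > 0\<close> by linarith
  have "N * ln s + r / s \<le> N * ln (r / N) + N \<longleftrightarrow> N * (u - 1 - ln u) \<le> 0"
    using gap by linarith
  also have "\<dots> \<longleftrightarrow> ln u = u - 1"
    using gap_nonneg \<open>N > 0\<close> by (auto simp: mult_le_0_iff)
  also have "\<dots> \<longleftrightarrow> s = r / N"
    using ln_eq_minus_one[OF u] assms unfolding u_def by (auto simp: field_simps)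
  finally show "N * ln s + r / s \<le> N * ln (r / N) + N \<longleftrightarrow> s = r / N" .
qed

lemma argmin_profile_over_scale:
  fixes F :: "'a \<Rightarrow> real \<Rightarrow> real" and c r :: "'a \<Rightarrow> real"
  assumes N: "N > 0" and r: "\<And>x. x \<in> X \<Longrightarrow> r x > 0"
    and F: "\<And>x s. x \<in> X \<Longrightarrow> s > 0 \<Longrightarrow> F x s = N * ln s + c x + r x / s"
  shows "(z \<in> X \<and> t > 0 \<and> (\<forall>x\<in>X. \<forall>s>0. F z t \<le> F x s))
     \<longleftrightarrow> (z \<in> X \<and> (\<forall>x\<in>X. N * ln (r z) + c z \<le> N * ln (r x) + c x) \<and> t = r z / N)"
proof -
  define m where "m x = N * ln (r x) + c x - N * ln N + N" for x
  have F_opt: "F x s = m x + ((N * ln s + r x / s) - (N * ln (r x / N) + N))" if "x \<in> X" "s > 0" for x s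
    using F[OF that] r[OF that(1)] N by (simp add: m_def ln_div algebra_simps)
  have opt_pos: "r x / N > 0" if "x \<in> X" for x
    using r[OF that] N by simp
  have lower: "m x \<le> F x s" if "x \<in> X" "s > 0" for x s
    using F_opt[OF that] ln_plus_ratio_minimum(1)[OF N r that(2)] that(1) by simp
  have attained: "F x (r x / N) = m x" if "x \<in> X" for x
    using F_opt[OF that opt_pos[OF that]] r[OF that] N by simp
  have unique: "F x s \<le> m x \<longleftrightarrow> s = r x / N" if "x \<in> X" "s > 0" for x s
    using F_opt[OF that] ln_plus_ratio_minimum(2)[OF N r that(2)] that(1) by simp
  show ?thesis
  proof
    assume min: "z \<in> X \<and> t > 0 \<and> (\<forall>x\<in>X. \<forall>s>0. F z t \<le> F x s)"
    then have t: "t = r z / N"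
      using unique attained opt_pos by fastforce
    have "m z \<le> m x" if "x \<in> X" for x
      using min that t attained opt_pos by fastforce
    with min t show "z \<in> X \<and> (\<forall>x\<in>X. N * ln (r z) + c z \<le> N * ln (r x) + c x) \<and> t = r z / N"
      by (simp add: m_def)
  next
    assume prof: "z \<in> X \<and> (\<forall>x\<in>X. N * ln (r z) + c z \<le> N * ln (r x) + c x) \<and> t = r z / N"
    then have "F z t \<le> F x s" if "x \<in> X" "s > 0" for x s
      using attained lower[OF that] that by (fastforce simp: m_def)
    with prof opt_pos show "z \<in> X \<and> t > 0 \<and> (\<forall>x\<in>X. \<forall>s>0. F z t \<le> F x s)"
      by blast
  qed
qed

theorem theorem3:
  fixes Phi :: "real^('n::{finite,linorder})^('n::{finite,linorder})"
    and B :: "'b set"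
    and Ob :: "'b \<Rightarrow> real^('n::{finite,linorder})^('n::{finite,linorder})"
    and Qbar C :: "real^('n::{finite,linorder})^('n::{finite,linorder})"
    and L R1 R2 R3 :: "real \<Rightarrow> 'b \<Rightarrow> real^('n::{finite,linorder})^('n::{finite,linorder})"
    and Q :: "real \<Rightarrow> 'b \<Rightarrow> real^(('n::{finite,linorder}) + ('n::{finite,linorder}))^(('n::{finite,linorder}) + ('n::{finite,linorder}))"
    and tg0 s0 :: real and b0 :: 'b
  assumes Ob_pd: "\<And>b. b \<in> B \<Longrightarrow> sym_pos_def (Ob b)"
    and Qbar_pd: "sym_pos_def Qbar"
    and C_fac: "Qbar = C ** transpose C" "lower_tri_posdiag C"
    and L_fac: "\<And>g b. g > 0 \<Longrightarrow> b \<in> B \<Longrightarrow>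
                  inverse g *\<^sub>R Ob b = L g b ** transpose (L g b) \<and> lower_tri_posdiag (L g b)"
    and QR: "\<And>g b. g > 0 \<Longrightarrow> b \<in> B \<Longrightarrow>
               block2 (Phi ** L g b) C (mat 1) 0 = Q g b ** block2 (R1 g b) (R2 g b) 0 (R3 g b)
               \<and> orthogonal_matrix (Q g b)
               \<and> upper_tri_posdiag (R1 g b) \<and> upper_tri_posdiag (R3 g b)"
  shows "(\<forall>g b. g > 0 \<longrightarrow> b \<in> B \<longrightarrow> (frob_norm C)^2 - (frob_norm (R2 g b))^2 > 0)
    \<and> ((tg0 > 0 \<and> b0 \<in> B \<and> s0 > 0 \<and>
         (\<forall>g b s. g > 0 \<longrightarrow> b \<in> B \<longrightarrow> s > 0 \<longrightarrow>
            EM_obj Phi Ob Qbar tg0 b0 s0 \<le> EM_obj Phi Ob Qbar g b s))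
       \<longleftrightarrow>
        (tg0 > 0 \<and> b0 \<in> B \<and>
         (\<forall>g b. g > 0 \<longrightarrow> b \<in> B \<longrightarrow>
            real CARD('n) * ln ((frob_norm C)^2 - (frob_norm (R2 tg0 b0))^2) + 2 * ln (det (R1 tg0 b0))
            \<le> real CARD('n) * ln ((frob_norm C)^2 - (frob_norm (R2 g b))^2) + 2 * ln (det (R1 g b)))
         \<and> s0 = ((frob_norm C)^2 - (frob_norm (R2 tg0 b0))^2) / real CARD('n)))"
proof -
  define X :: "(real \<times> 'b) set" where "X = {0<..} \<times> B"
  define r where "r x = (frob_norm C)^2 - (frob_norm (R2 (fst x) (snd x)))^2" for x :: "real \<times> 'b"
  have residual_pos: "r (g, b) > 0" if "g > 0" "b \<in> B" for g b
    using QR_residual_pos[of "Phi ** L g b" C "Q g b"] QR[OF that] by (simp add: r_def)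
  then have r_pos: "r x > 0" if "x \<in> X" for x
    using that unfolding X_def by auto
  have "EM_obj Phi Ob Qbar g b s = real CARD('n) * ln s + 2 * ln (det (R1 g b)) + r (g, b) / s"
    if "g > 0" "b \<in> B" "s > 0" for g b s
    using QR[OF that(1,2)]
    by (auto simp: r_def C_fac(1) intro!: det_pos_if_upper_tri_posdiag
        EM_obj_QR[where Ob = Ob and b = b, OF that(3) conjunct1[OF L_fac[OF that(1,2)]]])
  then have EM: "EM_obj Phi Ob Qbar (fst x) (snd x) s
      = real CARD('n) * ln s + 2 * ln (det (R1 (fst x) (snd x))) + r x / s" if "x \<in> X" "s > 0" for x s
    using that unfolding X_def by auto
  have ball_X: "(\<forall>x\<in>X. P x) \<longleftrightarrow> (\<forall>g b. g > 0 \<longrightarrow> b \<in> B \<longrightarrow> P (g, b))" for P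
    by (auto simp: X_def)
  have "0 < real CARD('n)"
    by simp
  from argmin_profile_over_scale[where X = X and r = r and z = "(tg0, b0)" and t = s0, OF this r_pos EM] residual_pos
  show ?thesis
    unfolding ball_X by (simp add: X_def r_def)
qed

end
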